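(* For each of the four boundary points of $P_2$ — top-left (NW), top-right (NE), bottom-left (SW), bottom-right (SE) — let $\beta_{\mathrm{NW}},\beta_{\mathrm{NE}},\beta_{\mathrm{SW}},\beta_{\mathrm{SE}}:P_2\to P_2$ be the chain map obtained by stacking on $P_2$ (above it for NW, NE; below it for SW, SE) the identity cobordism of $\mathbb 1$ with a single dot on the strand ending at that boundary point. These are chain maps, and $$\beta_{\mathrm{NW}}\simeq\beta_{\mathrm{SW}}\simeq-\beta_{\mathrm{NE}}\simeq-\beta_{\mathrm{SE}}$$ (chain homotopic), where $\beta_{\mathrm{NW}}$ is the map $b$ (dot on the left strand on $C_0$ and $x_{\mathrm{top}}$ on each $C_n$, $n\ge1$).
   Context: $P_2\in\mathrm{Kom}(2)$ is the complex with $C_0=\mathbb 1$, $C_n=q^{2n-1}e_1$ ($n\ge1$, homological degree $n$), $d_0=s$, $d_n=x_{\mathrm{top}}-x_{\mathrm{bot}}$ ($n$ odd), $d_n=x_{\mathrm{top}}+x_{\mathrm{bot}}$ ($n\ge2$ even), in Bar-Natan's dotted cobordism category over $\mathbb Z[\alpha]$ (relations: sphere $=0$, one-dotted sphere $=1$, two-dotted sphere $=0$, three-dotted sphere $=\alpha$, neck-cutting: a cylinder equals the sum of the two compressions with a dot on one side or the other). $\mathbb 1$ = two vertical strands, $e_1$ = cap over cup, $s$ the saddle, $x_{\mathrm{top}},x_{\mathrm{bot}}$ the dotted identities on the top/bottom arc of $e_1$. *)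

theory Defs
  imports "HOL-Computational_Algebra.Polynomial"
begin

text \<open>Concrete model of the relevant part of Bar-Natan's dotted cobordism category
  over Z[alpha] (alpha = the polynomial variable of int poly), restricted to the two
  crossingless 4-ended tangles One (two vertical strands) and E (= e_1, cap over cup).

  Every Hom space is free over Z[alpha]:
   Hom(One,One) = Z[alpha][x1,x2]/(x1^2-alpha, x2^2-alpha), x1 = dot on left strand,
                  x2 = dot on right strand (closure = two circles, A tensor A);
   Hom(E,E)     = Z[alpha][x1,x2]/(x1^2-alpha, x2^2-alpha), x1 = x_top, x2 = x_bot;
   Hom(One,E)   = span{s, s x}, Hom(E,One) = span{s', s' x}, x = a dot anywhere on the
                  (connected) saddle surface, x^2 = alpha.
  A morphism is stored as its coefficient function f a b = coefficient of x1^a x2^b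
  (for the mixed Hom spaces only the entries f a False are used: coefficient of s x^a).
  Composition uses neck-cutting: s' s = x_l + x_r and s s' = x_top + x_bot.\<close>

datatype obj = One | E

type_synonym mor = "bool \<Rightarrow> bool \<Rightarrow> int poly"

definition alpha :: "int poly" where "alpha = [:0, 1:]"

definition bn :: "bool \<Rightarrow> nat" where "bn a = (if a then 1 else 0)"

definition mzero :: mor where "mzero = (\<lambda>a b. 0)"
definition madd :: "mor \<Rightarrow> mor \<Rightarrow> mor" where "madd f g = (\<lambda>a b. f a b + g a b)"
definition mneg :: "mor \<Rightarrow> mor" where "mneg f = (\<lambda>a b. - f a b)"
definition msub :: "mor \<Rightarrow> mor \<Rightarrow> mor" where "msub f g = (\<lambda>a b. f a b - g a b)"

text \<open>multiplication in Z[alpha][x1,x2]/(x1^2-alpha,x2^2-alpha)\<close>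
definition mult2 :: "mor \<Rightarrow> mor \<Rightarrow> mor" where
  "mult2 g f = (\<lambda>a b. \<Sum>a1\<in>UNIV. \<Sum>b1\<in>UNIV.
      alpha ^ (bn (a1 \<and> (a1 \<noteq> a)) + bn (b1 \<and> (b1 \<noteq> b))) * g a1 b1 * f (a1 \<noteq> a) (b1 \<noteq> b))"

definition clean :: "mor \<Rightarrow> mor" where
  "clean f = (\<lambda>a b. if b then 0 else f a False)"

text \<open>multiplication of one-variable elements (x^2 = alpha)\<close>
definition mult1 :: "mor \<Rightarrow> mor \<Rightarrow> mor" where
  "mult1 g f = mult2 (clean g) (clean f)"

text \<open>identify x1 = x2 = x (absorbing an endomorphism into a saddle)\<close>
definition coll :: "mor \<Rightarrow> mor" where
  "coll f = (\<lambda>c d. if d then 0 else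
      (\<Sum>a\<in>UNIV. \<Sum>b\<in>UNIV. if (a \<noteq> b) = c then alpha ^ bn (a \<and> b) * f a b else 0))"

text \<open>p0 + p1 x  (on a saddle-composite) \<mapsto> p0 (x1 + x2) + p1 (alpha + x1 x2)
  (neck-cutting)\<close>
definition neck :: "mor \<Rightarrow> mor" where
  "neck p = (\<lambda>a b. if a = b then (if a then p True False else alpha * p True False)
                    else p False False)"

text \<open>comp A B C g f = g \<circ> f for f : A \<rightarrow> B, g : B \<rightarrow> C\<close>
definition comp :: "obj \<Rightarrow> obj \<Rightarrow> obj \<Rightarrow> mor \<Rightarrow> mor \<Rightarrow> mor" where
  "comp A B C g f =
     (if A = B \<and> B = C then mult2 g f
      else if A = B then mult1 g (coll f)
      else if B = C then mult1 (coll g) f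
      else neck (mult1 g f))"

definition mor_ok :: "obj \<Rightarrow> obj \<Rightarrow> mor \<Rightarrow> bool" where
  "mor_ok A B f = (A \<noteq> B \<longrightarrow> (\<forall>a. f a True = 0))"

text \<open>q-degrees: dot -2, saddle -1, alpha -4; a map C \<rightarrow> D between shifted objects
  q^sA A, q^sB B has degree deg(cobordism) + sB - sA.\<close>
definition basisdeg :: "obj \<Rightarrow> obj \<Rightarrow> bool \<Rightarrow> bool \<Rightarrow> int" where
  "basisdeg A B a b = (if A = B then - 2 * int (bn a + bn b) else - 1 - 2 * int (bn a))"

definition homog :: "obj \<Rightarrow> obj \<Rightarrow> int \<Rightarrow> int \<Rightarrow> int \<Rightarrow> mor \<Rightarrow> bool" where
  "homog A B sA sB k f = (\<forall>a b i. coeff (f a b) i \<noteq> 0 \<longrightarrow>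
      basisdeg A B a b - 4 * int i + sB - sA = k)"

definition idm :: mor where "idm = (\<lambda>a b. if \<not> a \<and> \<not> b then 1 else 0)"
definition saddle :: mor where "saddle = idm"  \<comment> \<open>s : One \<rightarrow> E\<close>
definition dot1 :: mor where "dot1 = (\<lambda>a b. if a \<and> \<not> b then 1 else 0)"
  \<comment> \<open>x_l on One, x_top on E\<close>
definition dot2 :: mor where "dot2 = (\<lambda>a b. if \<not> a \<and> b then 1 else 0)"
  \<comment> \<open>x_r on One, x_bot on E\<close>

definition cobj :: "nat \<Rightarrow> obj" where "cobj n = (if n = 0 then One else E)"
definition qsh :: "nat \<Rightarrow> int" where "qsh n = (if n = 0 then 0 else 2 * int n - 1)"
definition dP :: "nat \<Rightarrow> mor" where
  "dP n = (if n = 0 then saddle else if odd n then msub dot1 dot2 else madd dot1 dot2)"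

definition chain_map :: "(nat \<Rightarrow> mor) \<Rightarrow> bool" where
  "chain_map f = (\<forall>n. comp (cobj n) (cobj (Suc n)) (cobj (Suc n)) (f (Suc n)) (dP n)
                     = comp (cobj n) (cobj n) (cobj (Suc n)) (dP n) (f n))"

text \<open>f \<simeq> g via a homotopy h (h n : C_n \<rightarrow> C_(n-1)) homogeneous of q-degree k\<close>
definition homotopic :: "(nat \<Rightarrow> mor) \<Rightarrow> (nat \<Rightarrow> mor) \<Rightarrow> int \<Rightarrow> bool" where
  "homotopic f g k = (\<exists>h. (\<forall>n\<ge>1. mor_ok (cobj n) (cobj (n - 1)) (h n)
                              \<and> homog (cobj n) (cobj (n - 1)) (qsh n) (qsh (n - 1)) k (h n))
      \<and> msub (f 0) (g 0) = comp One E One (h 1) (dP 0)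
      \<and> (\<forall>n\<ge>1. msub (f n) (g n) =
            madd (comp (cobj n) (cobj (n - 1)) (cobj n) (dP (n - 1)) (h n))
                 (comp (cobj n) (cobj (Suc n)) (cobj n) (h (Suc n)) (dP n))))"

datatype corner = NW | NE | SW | SE

text \<open>stacking the dotted identity of One (dot on the strand ending at corner c) on P_2:
  on C_0 = One the dot sits on the left/right strand, on C_n = e_1 it sits on the
  top arc (NW, NE: stacked above) or bottom arc (SW, SE: stacked below).\<close>
definition beta :: "corner \<Rightarrow> nat \<Rightarrow> mor" where
  "beta c n = (if n = 0 then (if c = NW \<or> c = SW then dot1 else dot2)
               else (if c = NW \<or> c = NE then dot1 else dot2))"

definition bmap :: "nat \<Rightarrow> mor" where
  "bmap n = (if n = 0 then dot1 else dot1)"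

end

theory Submission
  imports Defs
begin

text \<open>A dot on either strand of \<open>\<one>\<close> slides through the saddle onto either arc of \<open>e\<^sub>1\<close>,
  and dots commute with the differentials in positive degrees, so the dot maps are chain maps.
  Neck-cutting gives \<open>s' s = x\<^sub>l + x\<^sub>r\<close> and \<open>s s' = x\<^sub>t\<^sub>o\<^sub>p + x\<^sub>b\<^sub>o\<^sub>t\<close>, while the differentials
  of \<open>P\<^sub>2\<close> are \<open>x\<^sub>t\<^sub>o\<^sub>p \<mp> x\<^sub>b\<^sub>o\<^sub>t\<close>. Hence the difference of two of the dot maps is, in each
  degree, either a differential or zero, and it is null-homotopic via a homotopy that is
  \<open>\<plusminus>\<close> the identity (the dual saddle \<open>s'\<close> in degree 1) in every other degree. Such a
  homotopy has q-degree \<open>-2\<close>.\<close>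

lemma sum_UNIV_bool: "(\<Sum>a\<in>(UNIV::bool set). f a) = f True + f False"
  by (simp add: UNIV_bool add.commute)

lemmas mor_unfold = sum_UNIV_bool mult2_def mult1_def clean_def coll_def neck_def
  madd_def msub_def mneg_def mzero_def idm_def dot1_def dot2_def saddle_def bn_def fun_eq_iff

lemma mult2_idm_left [simp]: "mult2 idm f = f"
  by (simp add: mor_unfold)

lemma mult2_idm_right [simp]: "mult2 f idm = f"
  by (simp add: mor_unfold)

lemma mult2_mzero_left [simp]: "mult2 mzero f = mzero"
  by (simp add: mor_unfold)

lemma mult2_mzero_right [simp]: "mult2 f mzero = mzero"
  by (simp add: mor_unfold)

lemma mult2_mneg_left [simp]: "mult2 (mneg g) f = mneg (mult2 g f)"
  by (simp add: mor_unfold sum_negf)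

lemma mult2_mneg_right [simp]: "mult2 g (mneg f) = mneg (mult2 g f)"
  by (simp add: mor_unfold sum_negf)

lemma comp_endo [simp]: "comp A A A g f = mult2 g f"
  by (simp add: comp_def)

text \<open>Between different objects \<open>idm\<close> is a saddle; these are the two neck-cutting relations.\<close>

lemma comp_dual_saddle_saddle: "comp One E One idm saddle = madd dot1 dot2"
  by (simp add: comp_def mor_unfold)

lemma comp_saddle_dual_saddle: "comp E One E saddle idm = madd dot1 dot2"
  by (simp add: comp_def mor_unfold)

lemma comp_mzero_left: "comp A B C mzero f = mzero"
  by (simp add: comp_def mor_unfold)

lemma comp_mzero_right: "comp A B C g mzero = mzero"
  by (simp add: comp_def mor_unfold)

lemma madd_mzero_left [simp]: "madd mzero f = f"
  by (simp add: madd_def mzero_def)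

lemma madd_mzero_right [simp]: "madd f mzero = f"
  by (simp add: madd_def mzero_def)

lemma msub_self [simp]: "msub f f = mzero"
  by (simp add: msub_def mzero_def)

lemma msub_mneg_right [simp]: "msub f (mneg g) = madd f g"
  by (simp add: msub_def mneg_def madd_def)

lemma mneg_msub [simp]: "mneg (msub f g) = madd (mneg f) g"
  by (simp add: msub_def mneg_def madd_def)

lemma mneg_mzero [simp]: "mneg mzero = mzero"
  by (simp add: mneg_def mzero_def)

lemma madd_commute: "madd f g = madd g f"
  by (simp add: madd_def add.commute)

lemma dP_0 [simp]: "dP 0 = saddle"
  by (simp add: dP_def)

lemma dP_pos: "n \<ge> 1 \<Longrightarrow> dP n = (if odd n then msub dot1 dot2 else madd dot1 dot2)"
  by (simp add: dP_def)

lemma mult2_commute: "mult2 g f = mult2 f g"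
  by (simp add: mor_unfold algebra_simps)

lemma comp_saddle_dot_slide:
  assumes "d \<in> {dot1, dot2}" and "d' \<in> {dot1, dot2}"
  shows "comp One E E d' saddle = comp One One E saddle d"
  using assms by (auto simp: comp_def mor_unfold)

lemma chain_map_beta: "chain_map (beta c)"
  unfolding chain_map_def
proof
  fix n
  show "comp (cobj n) (cobj (Suc n)) (cobj (Suc n)) (beta c (Suc n)) (dP n)
      = comp (cobj n) (cobj n) (cobj (Suc n)) (dP n) (beta c n)"
  proof (cases "n = 0")
    case True
    then show ?thesis
      by (simp add: cobj_def) (rule comp_saddle_dot_slide; simp add: beta_def)
  next
    case False
    then show ?thesis
      by (simp add: cobj_def beta_def mult2_commute)
  qed
qed

lemma homog_idm_step:
  assumes "n \<ge> 1"
  shows "homog (cobj n) (cobj (n - 1)) (qsh n) (qsh (n - 1)) (-2) idm"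
  using assms by (cases "n = 1") (auto simp: homog_def idm_def basisdeg_def cobj_def bn_def qsh_def)

lemma homog_mneg: "homog A B sA sB k f \<Longrightarrow> homog A B sA sB k (mneg f)"
  by (simp add: homog_def mneg_def)

lemma homog_mzero: "homog A B sA sB k mzero"
  by (simp add: homog_def mzero_def)

lemma homotopic_intro:
  assumes unit: "\<And>n. n \<ge> 1 \<Longrightarrow> h n \<in> {idm, mneg idm, mzero}"
    and base: "msub (f 0) (g 0) = comp One E One (h 1) (dP 0)"
    and step: "\<And>n. n \<ge> 1 \<Longrightarrow> msub (f n) (g n) =
        madd (comp (cobj n) (cobj (n - 1)) (cobj n) (dP (n - 1)) (h n))
             (comp (cobj n) (cobj (Suc n)) (cobj n) (h (Suc n)) (dP n))"
  shows "homotopic f g (-2)"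
  unfolding homotopic_def
proof (intro exI[of _ h] conjI allI impI base step)
  fix n :: nat assume "n \<ge> 1"
  with unit[of n] show "mor_ok (cobj n) (cobj (n - 1)) (h n)"
    by (auto simp: mor_ok_def idm_def mneg_def mzero_def)
  from \<open>n \<ge> 1\<close> unit[of n] show "homog (cobj n) (cobj (n - 1)) (qsh n) (qsh (n - 1)) (-2) (h n)"
    using homog_idm_step homog_mneg homog_mzero by auto
qed

definition alt_homotopy :: "bool \<Rightarrow> mor \<Rightarrow> nat \<Rightarrow> mor" where
  "alt_homotopy p u n = (if odd n = p then u else mzero)"

lemma homotopic_NW_SW: "homotopic (beta NW) (beta SW) (-2)"
proof (rule homotopic_intro[where h = "alt_homotopy False idm"])
  fix n :: nat assume "n \<ge> 1"
  then consider "n = 1" | "n \<ge> 2" "even n" | "n \<ge> 2" "odd n" by linarith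
  then show "msub (beta NW n) (beta SW n) =
      madd (comp (cobj n) (cobj (n - 1)) (cobj n) (dP (n - 1)) (alt_homotopy False idm n))
           (comp (cobj n) (cobj (Suc n)) (cobj n) (alt_homotopy False idm (Suc n)) (dP n))"
    by cases (auto simp: alt_homotopy_def beta_def dP_pos cobj_def comp_mzero_left comp_mzero_right)
qed (auto simp: alt_homotopy_def beta_def comp_mzero_left)

lemma homotopic_SW_neg_NE: "homotopic (beta SW) (\<lambda>n. mneg (beta NE n)) (-2)"
proof (rule homotopic_intro[where h = "alt_homotopy True idm"])
  fix n :: nat assume "n \<ge> 1"
  then consider "n = 1" | "n \<ge> 2" "even n" | "n \<ge> 2" "odd n" by linarith
  then show "msub (beta SW n) (mneg (beta NE n)) =
      madd (comp (cobj n) (cobj (n - 1)) (cobj n) (dP (n - 1)) (alt_homotopy True idm n))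
           (comp (cobj n) (cobj (Suc n)) (cobj n) (alt_homotopy True idm (Suc n)) (dP n))"
    by cases (auto simp: alt_homotopy_def beta_def dP_pos cobj_def comp_mzero_left comp_mzero_right
        comp_saddle_dual_saddle madd_commute)
qed (auto simp: alt_homotopy_def beta_def comp_dual_saddle_saddle)

lemma homotopic_neg_NE_neg_SE: "homotopic (\<lambda>n. mneg (beta NE n)) (\<lambda>n. mneg (beta SE n)) (-2)"
proof (rule homotopic_intro[where h = "alt_homotopy False (mneg idm)"])
  fix n :: nat assume "n \<ge> 1"
  then consider "n = 1" | "n \<ge> 2" "even n" | "n \<ge> 2" "odd n" by linarith
  then show "msub (mneg (beta NE n)) (mneg (beta SE n)) =
      madd (comp (cobj n) (cobj (n - 1)) (cobj n) (dP (n - 1)) (alt_homotopy False (mneg idm) n))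
           (comp (cobj n) (cobj (Suc n)) (cobj n) (alt_homotopy False (mneg idm) (Suc n)) (dP n))"
    by cases (auto simp: alt_homotopy_def beta_def dP_pos cobj_def comp_mzero_left comp_mzero_right)
qed (auto simp: alt_homotopy_def beta_def comp_mzero_left)

theorem mainTheorem9:
  shows "(\<forall>c. chain_map (beta c))
    \<and> homotopic (beta NW) (beta SW) (-2)
    \<and> homotopic (beta SW) (\<lambda>n. mneg (beta NE n)) (-2)
    \<and> homotopic (\<lambda>n. mneg (beta NE n)) (\<lambda>n. mneg (beta SE n)) (-2)
    \<and> beta NW = bmap"
proof (intro conjI allI chain_map_beta homotopic_NW_SW homotopic_SW_neg_NE
    homotopic_neg_NE_neg_SE)
  show "beta NW = bmap"
    by (simp add: beta_def bmap_def fun_eq_iff)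
qed

end
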